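(* Let $(a,b,c,d)\in\mathbb{C}^4\setminus\{0\}$ and $f=G_{a,b,c,d}$. Then the following are equivalent: (i) $f$ is reducible; (ii) either $a^2=b^2=c^2=d^2$, or at least three of $a,b,c,d$ are zero; (iii) the point $[f]\in\mathbb{P}(V)$ lies in the $\Gamma$-orbit of $[(x_1x_2-y_1y_2)(x_3x_4-y_3y_4)]$ (note that $G_{0,0,0,1}=\frac12(x_1x_2-y_1y_2)(x_3x_4-y_3y_4)$).
   Context: Let $(\mathbb{P}^1)^4$ have bihomogeneous coordinates $((x_1:y_1),(x_2:y_2),(x_3:y_3),(x_4:y_4))$, and $V=H^0((\mathbb{P}^1)^4,\mathcal{O}(1,1,1,1))$. For $(a,b,c,d)\in\mathbb{C}^4$ put $$G_{a,b,c,d}=\tfrac{a+d}{2}(x_1x_2x_3x_4+y_1y_2y_3y_4)+\tfrac{a-d}{2}(x_1x_2y_3y_4+y_1y_2x_3x_4)+\tfrac{b+c}{2}(x_1y_2x_3y_4+y_1x_2y_3x_4)+\tfrac{b-c}{2}(x_1y_2y_3x_4+y_1x_2x_3y_4).$$ $\Gamma=\mathrm{SL}_2(\mathbb{C})^4\rtimes\mathfrak{S}_4$ acts on $V$ and $\mathbb{P}(V)$, the $i$-th factor $\mathrm{SL}_2(\mathbb{C})$ acting linearly on $(x_i,y_i)$ and $\mathfrak{S}_4$ permuting the four factors of $(\mathbb{P}^1)^4$. *)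

theory Defs
  imports "HOL-Computational_Algebra.Computational_Algebra" "HOL-Combinatorics.Permutations"
begin

text \<open>The polynomial ring C[x1,y1,x2,y2,x3,y3,x4,y4] as an iterated univariate
  polynomial ring. Level k (k = 0..7) carries the variable number k;
  variable 2i is x_(i+1), variable 2i+1 is y_(i+1).\<close>

type_synonym P1 = "complex poly"
type_synonym P2 = "P1 poly"
type_synonym P3 = "P2 poly"
type_synonym P4 = "P3 poly"
type_synonym P5 = "P4 poly"
type_synonym P6 = "P5 poly"
type_synonym P7 = "P6 poly"
type_synonym P8 = "P7 poly"

definition L8 :: "complex \<Rightarrow> P8" where
  "L8 c = [:[:[:[:[:[:[:[:c:]:]:]:]:]:]:]:]"

definition var :: "nat \<Rightarrow> P8" where
  "var k = (if k = 0 then [:[:[:[:[:[:[:([:0,1:]::P1):]:]:]:]:]:]:]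
       else if k = 1 then [:[:[:[:[:[:([:0,1:]::P2):]:]:]:]:]:]
       else if k = 2 then [:[:[:[:[:([:0,1:]::P3):]:]:]:]:]
       else if k = 3 then [:[:[:[:([:0,1:]::P4):]:]:]:]
       else if k = 4 then [:[:[:([:0,1:]::P5):]:]:]
       else if k = 5 then [:[:([:0,1:]::P6):]:]
       else if k = 6 then [:([:0,1:]::P7):]
       else ([:0,1:]::P8))"

definition X :: "nat \<Rightarrow> P8" where "X i = var (2*i)"
definition Y :: "nat \<Rightarrow> P8" where "Y i = var (2*i+1)"

definition eval1 :: "P1 \<Rightarrow> (nat \<Rightarrow> P8) \<Rightarrow> P8" where
  "eval1 p s = poly (map_poly L8 p) (s 0)"
definition eval2 :: "P2 \<Rightarrow> (nat \<Rightarrow> P8) \<Rightarrow> P8" where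
  "eval2 p s = poly (map_poly (\<lambda>q. eval1 q s) p) (s 1)"
definition eval3 :: "P3 \<Rightarrow> (nat \<Rightarrow> P8) \<Rightarrow> P8" where
  "eval3 p s = poly (map_poly (\<lambda>q. eval2 q s) p) (s 2)"
definition eval4 :: "P4 \<Rightarrow> (nat \<Rightarrow> P8) \<Rightarrow> P8" where
  "eval4 p s = poly (map_poly (\<lambda>q. eval3 q s) p) (s 3)"
definition eval5 :: "P5 \<Rightarrow> (nat \<Rightarrow> P8) \<Rightarrow> P8" where
  "eval5 p s = poly (map_poly (\<lambda>q. eval4 q s) p) (s 4)"
definition eval6 :: "P6 \<Rightarrow> (nat \<Rightarrow> P8) \<Rightarrow> P8" where
  "eval6 p s = poly (map_poly (\<lambda>q. eval5 q s) p) (s 5)"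
definition eval7 :: "P7 \<Rightarrow> (nat \<Rightarrow> P8) \<Rightarrow> P8" where
  "eval7 p s = poly (map_poly (\<lambda>q. eval6 q s) p) (s 6)"
definition eval8 :: "P8 \<Rightarrow> (nat \<Rightarrow> P8) \<Rightarrow> P8" where
  "eval8 p s = poly (map_poly (\<lambda>q. eval7 q s) p) (s 7)"

definition G :: "complex \<Rightarrow> complex \<Rightarrow> complex \<Rightarrow> complex \<Rightarrow> P8" where
  "G a b c d =
     L8 ((a+d)/2) * (X 0 * X 1 * X 2 * X 3 + Y 0 * Y 1 * Y 2 * Y 3)
   + L8 ((a-d)/2) * (X 0 * X 1 * Y 2 * Y 3 + Y 0 * Y 1 * X 2 * X 3)
   + L8 ((b+c)/2) * (X 0 * Y 1 * X 2 * Y 3 + Y 0 * X 1 * Y 2 * X 3)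
   + L8 ((b-c)/2) * (X 0 * Y 1 * Y 2 * X 3 + Y 0 * X 1 * X 2 * Y 3)"

text \<open>Action of an element of Gamma = SL2(C)^4 x| S4 on polynomials:
  the i-th factor is the matrix ((al i, be i),(ga i, de i)) of determinant 1,
  acting linearly on (x_i, y_i), and the permutation sg of {0..3} permutes the factors.\<close>
definition Gamma_subst ::
  "(nat \<Rightarrow> complex) \<Rightarrow> (nat \<Rightarrow> complex) \<Rightarrow> (nat \<Rightarrow> complex) \<Rightarrow> (nat \<Rightarrow> complex)
   \<Rightarrow> (nat \<Rightarrow> nat) \<Rightarrow> nat \<Rightarrow> P8" where
  "Gamma_subst al be ga de sg k =
     (let i = k div 2 in
      if even k then L8 (al i) * X (sg i) + L8 (be i) * Y (sg i)
      else L8 (ga i) * X (sg i) + L8 (de i) * Y (sg i))"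

definition in_Gamma :: "(nat \<Rightarrow> complex) \<Rightarrow> (nat \<Rightarrow> complex) \<Rightarrow> (nat \<Rightarrow> complex)
   \<Rightarrow> (nat \<Rightarrow> complex) \<Rightarrow> (nat \<Rightarrow> nat) \<Rightarrow> bool" where
  "in_Gamma al be ga de sg \<longleftrightarrow>
     (\<forall>i<4. al i * de i - be i * ga i = 1) \<and> sg permutes {0..<4}"

definition in_Gamma_orbit_proj :: "P8 \<Rightarrow> P8 \<Rightarrow> bool" where
  "in_Gamma_orbit_proj f h \<longleftrightarrow>
     (\<exists>al be ga de sg lam. in_Gamma al be ga de sg \<and> lam \<noteq> 0 \<and>
        f = L8 lam * eval8 h (Gamma_subst al be ga de sg))"

definition reducible :: "P8 \<Rightarrow> bool" where
  "reducible f \<longleftrightarrow> f \<noteq> 0 \<and> \<not> is_unit f \<and> \<not> irreducible f"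

end

theory Submission
  imports Defs
begin

text \<open>
  Polynomials in the eight variables are compared through their values at points of C^8.
  G has degree at most one in every variable, so in a factorisation G = p q no variable occurs in
  both factors; moreover the variables of p come in pairs x_i, y_i, since G vanishes wherever
  x_i = y_i = 0. Hence p and q depend on the coordinates of complementary nonempty sets of factors
  of (P^1)^4, and the values of G at points mixed from these two sets of factors form a matrix of
  rank one. At 0/1 points G takes the value of a single coefficient, and the vanishing 2 x 2 minors
  force a^2 = b^2 = c^2 = d^2 or three vanishing parameters. Conversely each of these forms is an
  explicit element of Gamma applied to (x_1 x_2 - y_1 y_2)(x_3 x_4 - y_3 y_4), which is reducible
  because both factors are non-constant.
\<close>

section \<open>Evaluating the iterated polynomial ring\<close>

definition is_ring_hom :: "('a::comm_ring_1 \<Rightarrow> 'b::comm_ring_1) \<Rightarrow> bool" where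
  "is_ring_hom f \<longleftrightarrow>
     f 0 = 0 \<and> f 1 = 1 \<and> (\<forall>x y. f (x + y) = f x + f y) \<and> (\<forall>x y. f (x * y) = f x * f y)"

lemma ring_hom_zero: "is_ring_hom f \<Longrightarrow> f 0 = 0"
  and ring_hom_one: "is_ring_hom f \<Longrightarrow> f 1 = 1"
  and ring_hom_add: "is_ring_hom f \<Longrightarrow> f (x + y) = f x + f y"
  and ring_hom_mult: "is_ring_hom f \<Longrightarrow> f (x * y) = f x * f y"
  by (simp_all add: is_ring_hom_def)

lemma ring_hom_uminus: "is_ring_hom f \<Longrightarrow> f (- x) = - f x"
  using ring_hom_add[of f "- x" x] by (simp add: ring_hom_zero eq_neg_iff_add_eq_0)

lemma ring_hom_diff: "is_ring_hom f \<Longrightarrow> f (x - y) = f x - f y"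
  using ring_hom_add[of f x "- y"] by (simp add: ring_hom_uminus)

lemma ring_hom_sum: "is_ring_hom f \<Longrightarrow> f (sum g A) = (\<Sum>i\<in>A. f (g i))"
  by (induction A rule: infinite_finite_induct) (simp_all add: ring_hom_zero ring_hom_add)

lemma ring_hom_id: "is_ring_hom (\<lambda>x. x)"
  and ring_hom_pCons_const: "is_ring_hom (\<lambda>c. [:c:])"
  and ring_hom_poly: "is_ring_hom (\<lambda>p. poly p x)"
  by (simp_all add: is_ring_hom_def)

lemma ring_hom_L8: "is_ring_hom L8"
  unfolding is_ring_hom_def L8_def by (simp add: one_pCons[symmetric])

lemma map_poly_add_hom: "is_ring_hom f \<Longrightarrow> map_poly f (p + q) = map_poly f p + map_poly f q"
  by (intro poly_eqI) (simp add: coeff_map_poly ring_hom_zero ring_hom_add)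

lemma map_poly_mult_hom: "is_ring_hom f \<Longrightarrow> map_poly f (p * q) = map_poly f p * map_poly f q"
  by (intro poly_eqI) (simp add: coeff_map_poly ring_hom_zero ring_hom_mult coeff_mult ring_hom_sum)

lemma ring_hom_poly_map_poly: "is_ring_hom f \<Longrightarrow> is_ring_hom (\<lambda>p. poly (map_poly f p) x)"
  unfolding is_ring_hom_def
  by (simp add: map_poly_add_hom map_poly_mult_hom ring_hom_zero ring_hom_one
      is_ring_hom_def[symmetric])

lemma ring_hom_poly_map_poly_comp:
  "is_ring_hom h \<Longrightarrow> f 0 = 0 \<Longrightarrow> h (poly (map_poly f p) x) = poly (map_poly (h \<circ> f) p) (h x)"
  by (induction p) (auto simp: map_poly_pCons ring_hom_zero ring_hom_add ring_hom_mult)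

definition subst_step ::
  "('a::comm_ring_1 \<Rightarrow> (nat \<Rightarrow> 'r::comm_ring_1) \<Rightarrow> 'r) \<Rightarrow> nat \<Rightarrow> 'a poly \<Rightarrow> (nat \<Rightarrow> 'r) \<Rightarrow> 'r"
  where "subst_step E n p w = poly (map_poly (\<lambda>q. E q w) p) (w n)"

lemma subst_step_hom: "(\<And>w. is_ring_hom (\<lambda>q. E q w)) \<Longrightarrow> is_ring_hom (\<lambda>p. subst_step E n p w)"
  unfolding subst_step_def by (rule ring_hom_poly_map_poly)

lemma subst_step_local:
  assumes "\<And>q w w'. \<forall>j<n. w j = w' j \<Longrightarrow> E q w = E q w'" and "\<forall>j<Suc n. w j = w' j"
  shows "subst_step E n p w = subst_step E n p w'"
proof -
  have "(\<lambda>q. E q w) = (\<lambda>q. E q w')" and "w n = w' n"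
    using assms by auto
  then show ?thesis
    unfolding subst_step_def by simp
qed

lemma subst_step_const:
  assumes "is_ring_hom (\<lambda>q. E q w)"
  shows "subst_step E n [:q:] w = E q w"
  using ring_hom_zero[OF assms] by (simp add: subst_step_def map_poly_pCons)

lemma subst_step_var:
  assumes "is_ring_hom (\<lambda>q. E q w)"
  shows "subst_step E n [:0, 1:] w = w n"
  using ring_hom_zero[OF assms] ring_hom_one[OF assms] by (simp add: subst_step_def map_poly_pCons)

lemma subst_step_comp:
  assumes "is_ring_hom h" "is_ring_hom (\<lambda>q. E q w)" "\<And>q. h (E q w) = E' q (\<lambda>j. h (w j))"
  shows "h (subst_step E n p w) = subst_step E' n p (\<lambda>j. h (w j))"
  using ring_hom_poly_map_poly_comp[OF assms(1), of "\<lambda>q. E q w"] ring_hom_zero[OF assms(2)] assms(3)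
  by (simp add: subst_step_def o_def)

lemma subst_step_eq_0:
  fixes E :: "'a::comm_ring_1 \<Rightarrow> (nat \<Rightarrow> complex) \<Rightarrow> complex"
  assumes hom: "\<And>w. is_ring_hom (\<lambda>q. E q w)"
    and local: "\<And>q w w'. \<forall>j<n. w j = w' j \<Longrightarrow> E q w = E q w'"
    and eq_0: "\<And>q. \<forall>w. E q w = 0 \<Longrightarrow> q = 0"
    and vanish: "\<forall>w. subst_step E n p w = 0"
  shows "p = 0"
proof -
  have "E (coeff p i) w = 0" for i w
  proof -
    have "poly (map_poly (\<lambda>q. E q w) p) t = 0" for t
    proof -
      have "(\<lambda>q. E q (w(n := t))) = (\<lambda>q. E q w)"
        using local by auto
      then show ?thesis
        using spec[OF vanish, of "w(n := t)"] by (simp add: subst_step_def)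
    qed
    then have "map_poly (\<lambda>q. E q w) p = 0"
      using poly_all_0_iff_0 by blast
    then show ?thesis
      using coeff_map_poly[of "\<lambda>q. E q w" p i] by (simp add: ring_hom_zero[OF hom])
  qed
  then show ?thesis
    using eq_0 by (simp add: poly_eq_iff)
qed

definition subst1 :: "(complex \<Rightarrow> 'r::comm_ring_1) \<Rightarrow> P1 \<Rightarrow> (nat \<Rightarrow> 'r) \<Rightarrow> 'r"
  where "subst1 \<phi> = subst_step (\<lambda>c w. \<phi> c) 0"

definition subst2 :: "(complex \<Rightarrow> 'r::comm_ring_1) \<Rightarrow> P2 \<Rightarrow> (nat \<Rightarrow> 'r) \<Rightarrow> 'r"
  where "subst2 \<phi> = subst_step (subst1 \<phi>) 1"

definition subst3 :: "(complex \<Rightarrow> 'r::comm_ring_1) \<Rightarrow> P3 \<Rightarrow> (nat \<Rightarrow> 'r) \<Rightarrow> 'r"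
  where "subst3 \<phi> = subst_step (subst2 \<phi>) 2"

definition subst4 :: "(complex \<Rightarrow> 'r::comm_ring_1) \<Rightarrow> P4 \<Rightarrow> (nat \<Rightarrow> 'r) \<Rightarrow> 'r"
  where "subst4 \<phi> = subst_step (subst3 \<phi>) 3"

definition subst5 :: "(complex \<Rightarrow> 'r::comm_ring_1) \<Rightarrow> P5 \<Rightarrow> (nat \<Rightarrow> 'r) \<Rightarrow> 'r"
  where "subst5 \<phi> = subst_step (subst4 \<phi>) 4"

definition subst6 :: "(complex \<Rightarrow> 'r::comm_ring_1) \<Rightarrow> P6 \<Rightarrow> (nat \<Rightarrow> 'r) \<Rightarrow> 'r"
  where "subst6 \<phi> = subst_step (subst5 \<phi>) 5"

definition subst7 :: "(complex \<Rightarrow> 'r::comm_ring_1) \<Rightarrow> P7 \<Rightarrow> (nat \<Rightarrow> 'r) \<Rightarrow> 'r"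
  where "subst7 \<phi> = subst_step (subst6 \<phi>) 6"

definition subst8 :: "(complex \<Rightarrow> 'r::comm_ring_1) \<Rightarrow> P8 \<Rightarrow> (nat \<Rightarrow> 'r) \<Rightarrow> 'r"
  where "subst8 \<phi> = subst_step (subst7 \<phi>) 7"

lemma subst1_hom: "is_ring_hom \<phi> \<Longrightarrow> is_ring_hom (\<lambda>p. subst1 \<phi> p w)"
  unfolding subst1_def by (rule subst_step_hom) simp

lemma subst2_hom: "is_ring_hom \<phi> \<Longrightarrow> is_ring_hom (\<lambda>p. subst2 \<phi> p w)"
  unfolding subst2_def by (rule subst_step_hom) (simp add: subst1_hom)

lemma subst3_hom: "is_ring_hom \<phi> \<Longrightarrow> is_ring_hom (\<lambda>p. subst3 \<phi> p w)"
  unfolding subst3_def by (rule subst_step_hom) (simp add: subst2_hom)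

lemma subst4_hom: "is_ring_hom \<phi> \<Longrightarrow> is_ring_hom (\<lambda>p. subst4 \<phi> p w)"
  unfolding subst4_def by (rule subst_step_hom) (simp add: subst3_hom)

lemma subst5_hom: "is_ring_hom \<phi> \<Longrightarrow> is_ring_hom (\<lambda>p. subst5 \<phi> p w)"
  unfolding subst5_def by (rule subst_step_hom) (simp add: subst4_hom)

lemma subst6_hom: "is_ring_hom \<phi> \<Longrightarrow> is_ring_hom (\<lambda>p. subst6 \<phi> p w)"
  unfolding subst6_def by (rule subst_step_hom) (simp add: subst5_hom)

lemma subst7_hom: "is_ring_hom \<phi> \<Longrightarrow> is_ring_hom (\<lambda>p. subst7 \<phi> p w)"
  unfolding subst7_def by (rule subst_step_hom) (simp add: subst6_hom)

lemma subst8_hom: "is_ring_hom \<phi> \<Longrightarrow> is_ring_hom (\<lambda>p. subst8 \<phi> p w)"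
  unfolding subst8_def by (rule subst_step_hom) (simp add: subst7_hom)


lemma subst1_local: "\<forall>j<1. w j = w' j \<Longrightarrow> subst1 \<phi> p w = subst1 \<phi> p w'"
  unfolding subst1_def by (rule subst_step_local) auto

lemma subst2_local: "\<forall>j<2. w j = w' j \<Longrightarrow> subst2 \<phi> p w = subst2 \<phi> p w'"
  unfolding subst2_def by (rule subst_step_local) (auto intro: subst1_local)

lemma subst3_local: "\<forall>j<3. w j = w' j \<Longrightarrow> subst3 \<phi> p w = subst3 \<phi> p w'"
  unfolding subst3_def by (rule subst_step_local) (auto intro: subst2_local)

lemma subst4_local: "\<forall>j<4. w j = w' j \<Longrightarrow> subst4 \<phi> p w = subst4 \<phi> p w'"
  unfolding subst4_def by (rule subst_step_local) (auto intro: subst3_local)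

lemma subst5_local: "\<forall>j<5. w j = w' j \<Longrightarrow> subst5 \<phi> p w = subst5 \<phi> p w'"
  unfolding subst5_def by (rule subst_step_local) (auto intro: subst4_local)

lemma subst6_local: "\<forall>j<6. w j = w' j \<Longrightarrow> subst6 \<phi> p w = subst6 \<phi> p w'"
  unfolding subst6_def by (rule subst_step_local) (auto intro: subst5_local)

lemma subst7_local: "\<forall>j<7. w j = w' j \<Longrightarrow> subst7 \<phi> p w = subst7 \<phi> p w'"
  unfolding subst7_def by (rule subst_step_local) (auto intro: subst6_local)

lemma subst8_local: "\<forall>j<8. w j = w' j \<Longrightarrow> subst8 \<phi> p w = subst8 \<phi> p w'"
  unfolding subst8_def by (rule subst_step_local) (auto intro: subst7_local)

lemma subst1_const: "is_ring_hom \<phi> \<Longrightarrow> subst1 \<phi> [:c:] w = \<phi> c"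
  and subst1_var: "is_ring_hom \<phi> \<Longrightarrow> subst1 \<phi> [:0, 1:] w = w 0"
  by (simp_all add: subst1_def subst_step_const subst_step_var)

lemma subst2_const: "is_ring_hom \<phi> \<Longrightarrow> subst2 \<phi> [:q:] w = subst1 \<phi> q w"
  and subst2_var: "is_ring_hom \<phi> \<Longrightarrow> subst2 \<phi> [:0, 1:] w = w 1"
  by (simp_all add: subst2_def subst_step_const subst_step_var subst1_hom)

lemma subst3_const: "is_ring_hom \<phi> \<Longrightarrow> subst3 \<phi> [:q:] w = subst2 \<phi> q w"
  and subst3_var: "is_ring_hom \<phi> \<Longrightarrow> subst3 \<phi> [:0, 1:] w = w 2"
  by (simp_all add: subst3_def subst_step_const subst_step_var subst2_hom)

lemma subst4_const: "is_ring_hom \<phi> \<Longrightarrow> subst4 \<phi> [:q:] w = subst3 \<phi> q w"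
  and subst4_var: "is_ring_hom \<phi> \<Longrightarrow> subst4 \<phi> [:0, 1:] w = w 3"
  by (simp_all add: subst4_def subst_step_const subst_step_var subst3_hom)

lemma subst5_const: "is_ring_hom \<phi> \<Longrightarrow> subst5 \<phi> [:q:] w = subst4 \<phi> q w"
  and subst5_var: "is_ring_hom \<phi> \<Longrightarrow> subst5 \<phi> [:0, 1:] w = w 4"
  by (simp_all add: subst5_def subst_step_const subst_step_var subst4_hom)

lemma subst6_const: "is_ring_hom \<phi> \<Longrightarrow> subst6 \<phi> [:q:] w = subst5 \<phi> q w"
  and subst6_var: "is_ring_hom \<phi> \<Longrightarrow> subst6 \<phi> [:0, 1:] w = w 5"
  by (simp_all add: subst6_def subst_step_const subst_step_var subst5_hom)

lemma subst7_const: "is_ring_hom \<phi> \<Longrightarrow> subst7 \<phi> [:q:] w = subst6 \<phi> q w"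
  and subst7_var: "is_ring_hom \<phi> \<Longrightarrow> subst7 \<phi> [:0, 1:] w = w 6"
  by (simp_all add: subst7_def subst_step_const subst_step_var subst6_hom)

lemma subst8_const: "is_ring_hom \<phi> \<Longrightarrow> subst8 \<phi> [:q:] w = subst7 \<phi> q w"
  and subst8_var: "is_ring_hom \<phi> \<Longrightarrow> subst8 \<phi> [:0, 1:] w = w 7"
  by (simp_all add: subst8_def subst_step_const subst_step_var subst7_hom)

lemmas subst_const = subst1_const subst2_const subst3_const subst4_const subst5_const subst6_const
  subst7_const subst8_const
lemmas subst_var = subst1_var subst2_var subst3_var subst4_var subst5_var subst6_var subst7_var
  subst8_var

lemma subst1_comp:
  "is_ring_hom h \<Longrightarrow> is_ring_hom \<phi> \<Longrightarrow> h (subst1 \<phi> p w) = subst1 (\<lambda>c. h (\<phi> c)) p (\<lambda>j. h (w j))"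
  unfolding subst1_def by (rule subst_step_comp) simp_all

lemma subst2_comp:
  "is_ring_hom h \<Longrightarrow> is_ring_hom \<phi> \<Longrightarrow> h (subst2 \<phi> p w) = subst2 (\<lambda>c. h (\<phi> c)) p (\<lambda>j. h (w j))"
  unfolding subst2_def by (rule subst_step_comp) (simp_all add: subst1_hom subst1_comp)

lemma subst3_comp:
  "is_ring_hom h \<Longrightarrow> is_ring_hom \<phi> \<Longrightarrow> h (subst3 \<phi> p w) = subst3 (\<lambda>c. h (\<phi> c)) p (\<lambda>j. h (w j))"
  unfolding subst3_def by (rule subst_step_comp) (simp_all add: subst2_hom subst2_comp)

lemma subst4_comp:
  "is_ring_hom h \<Longrightarrow> is_ring_hom \<phi> \<Longrightarrow> h (subst4 \<phi> p w) = subst4 (\<lambda>c. h (\<phi> c)) p (\<lambda>j. h (w j))"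
  unfolding subst4_def by (rule subst_step_comp) (simp_all add: subst3_hom subst3_comp)

lemma subst5_comp:
  "is_ring_hom h \<Longrightarrow> is_ring_hom \<phi> \<Longrightarrow> h (subst5 \<phi> p w) = subst5 (\<lambda>c. h (\<phi> c)) p (\<lambda>j. h (w j))"
  unfolding subst5_def by (rule subst_step_comp) (simp_all add: subst4_hom subst4_comp)

lemma subst6_comp:
  "is_ring_hom h \<Longrightarrow> is_ring_hom \<phi> \<Longrightarrow> h (subst6 \<phi> p w) = subst6 (\<lambda>c. h (\<phi> c)) p (\<lambda>j. h (w j))"
  unfolding subst6_def by (rule subst_step_comp) (simp_all add: subst5_hom subst5_comp)

lemma subst7_comp:
  "is_ring_hom h \<Longrightarrow> is_ring_hom \<phi> \<Longrightarrow> h (subst7 \<phi> p w) = subst7 (\<lambda>c. h (\<phi> c)) p (\<lambda>j. h (w j))"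
  unfolding subst7_def by (rule subst_step_comp) (simp_all add: subst6_hom subst6_comp)

lemma subst8_comp:
  "is_ring_hom h \<Longrightarrow> is_ring_hom \<phi> \<Longrightarrow> h (subst8 \<phi> p w) = subst8 (\<lambda>c. h (\<phi> c)) p (\<lambda>j. h (w j))"
  unfolding subst8_def by (rule subst_step_comp) (simp_all add: subst7_hom subst7_comp)

lemma subst1_eq_0: "\<forall>w. subst1 (\<lambda>c::complex. c) p w = 0 \<Longrightarrow> p = 0"
  unfolding subst1_def
  by (rule subst_step_eq_0[where E="\<lambda>c w. c" and n=0]) (auto simp: ring_hom_id)

lemma subst2_eq_0: "\<forall>w. subst2 (\<lambda>c::complex. c) p w = 0 \<Longrightarrow> p = 0"
  unfolding subst2_def
  by (rule subst_step_eq_0[where E="subst1 (\<lambda>c. c)" and n=1]) 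
    (auto simp: subst1_hom ring_hom_id intro: subst1_local subst1_eq_0)

lemma subst3_eq_0: "\<forall>w. subst3 (\<lambda>c::complex. c) p w = 0 \<Longrightarrow> p = 0"
  unfolding subst3_def
  by (rule subst_step_eq_0[where E="subst2 (\<lambda>c. c)" and n=2]) 
    (auto simp: subst2_hom ring_hom_id intro: subst2_local subst2_eq_0)

lemma subst4_eq_0: "\<forall>w. subst4 (\<lambda>c::complex. c) p w = 0 \<Longrightarrow> p = 0"
  unfolding subst4_def
  by (rule subst_step_eq_0[where E="subst3 (\<lambda>c. c)" and n=3]) 
    (auto simp: subst3_hom ring_hom_id intro: subst3_local subst3_eq_0)

lemma subst5_eq_0: "\<forall>w. subst5 (\<lambda>c::complex. c) p w = 0 \<Longrightarrow> p = 0"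
  unfolding subst5_def
  by (rule subst_step_eq_0[where E="subst4 (\<lambda>c. c)" and n=4]) 
    (auto simp: subst4_hom ring_hom_id intro: subst4_local subst4_eq_0)

lemma subst6_eq_0: "\<forall>w. subst6 (\<lambda>c::complex. c) p w = 0 \<Longrightarrow> p = 0"
  unfolding subst6_def
  by (rule subst_step_eq_0[where E="subst5 (\<lambda>c. c)" and n=5]) 
    (auto simp: subst5_hom ring_hom_id intro: subst5_local subst5_eq_0)

lemma subst7_eq_0: "\<forall>w. subst7 (\<lambda>c::complex. c) p w = 0 \<Longrightarrow> p = 0"
  unfolding subst7_def
  by (rule subst_step_eq_0[where E="subst6 (\<lambda>c. c)" and n=6]) 
    (auto simp: subst6_hom ring_hom_id intro: subst6_local subst6_eq_0)

lemma subst8_eq_0: "\<forall>w. subst8 (\<lambda>c::complex. c) p w = 0 \<Longrightarrow> p = 0"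
  unfolding subst8_def
  by (rule subst_step_eq_0[where E="subst7 (\<lambda>c. c)" and n=7]) 
    (auto simp: subst7_hom ring_hom_id intro: subst7_local subst7_eq_0)

lemma eval8_eq_subst8: "eval8 p s = subst8 L8 p s"
proof -
  have 1: "eval1 q s = subst1 L8 q s" for q
    unfolding eval1_def subst1_def subst_step_def by simp
  have 2: "eval2 q s = subst2 L8 q s" for q
    unfolding eval2_def subst2_def subst_step_def by (simp add: 1[abs_def] flip: subst_step_def)
  have 3: "eval3 q s = subst3 L8 q s" for q
    unfolding eval3_def subst3_def subst_step_def by (simp add: 2[abs_def] flip: subst_step_def)
  have 4: "eval4 q s = subst4 L8 q s" for q
    unfolding eval4_def subst4_def subst_step_def by (simp add: 3[abs_def] flip: subst_step_def)
  have 5: "eval5 q s = subst5 L8 q s" for q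
    unfolding eval5_def subst5_def subst_step_def by (simp add: 4[abs_def] flip: subst_step_def)
  have 6: "eval6 q s = subst6 L8 q s" for q
    unfolding eval6_def subst6_def subst_step_def by (simp add: 5[abs_def] flip: subst_step_def)
  have 7: "eval7 q s = subst7 L8 q s" for q
    unfolding eval7_def subst7_def subst_step_def by (simp add: 6[abs_def] flip: subst_step_def)
  show ?thesis
    unfolding eval8_def subst8_def subst_step_def by (simp add: 7[abs_def] flip: subst_step_def)
qed

lemma eval8_mult: "eval8 (p * q) s = eval8 p s * eval8 q s"
  unfolding eval8_eq_subst8 using ring_hom_mult[OF subst8_hom[OF ring_hom_L8]] .

definition pval :: "(nat \<Rightarrow> complex) \<Rightarrow> P8 \<Rightarrow> complex" where
  "pval z p = subst8 (\<lambda>c. c) p z"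

lemma ring_hom_pval: "is_ring_hom (pval z)"
  unfolding pval_def using subst8_hom[OF ring_hom_id] by simp

lemma pval_add [simp]: "pval z (p + q) = pval z p + pval z q"
  and pval_mult [simp]: "pval z (p * q) = pval z p * pval z q"
  and pval_diff [simp]: "pval z (p - q) = pval z p - pval z q"
  and pval_0 [simp]: "pval z 0 = 0"
  and pval_1 [simp]: "pval z 1 = 1"
  by (simp_all add: ring_hom_add ring_hom_mult ring_hom_diff ring_hom_zero ring_hom_one
      ring_hom_pval)

lemma pval_L8 [simp]: "pval z (L8 c) = c"
  by (simp add: pval_def L8_def ring_hom_id subst_const)

lemma pval_var: "k < 8 \<Longrightarrow> pval z (var k) = z k"
  using less_Suc_eq[of k 7]
  by (auto simp: pval_def var_def ring_hom_id subst_const subst_var)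

lemma pval_X [simp]: "i < 4 \<Longrightarrow> pval z (X i) = z (2 * i)"
  and pval_Y [simp]: "i < 4 \<Longrightarrow> pval z (Y i) = z (2 * i + 1)"
  by (simp_all add: X_def Y_def pval_var)

lemma pval_local: "\<forall>j<8. z j = z' j \<Longrightarrow> pval z p = pval z' p"
  unfolding pval_def by (rule subst8_local)

lemma P8_eqI: "(\<And>z. pval z p = pval z q) \<Longrightarrow> p = q"
  using subst8_eq_0[of "p - q"] by (simp add: pval_def [symmetric])

lemma pval_eval8: "pval z (eval8 p s) = pval (\<lambda>j. pval z (s j)) p"
  using subst8_comp[OF ring_hom_pval ring_hom_L8, where p=p and w=s]
  by (simp add: eval8_eq_subst8 pval_def [symmetric])

lemma pval_eval8_upd:
  "pval z (eval8 p (var(k := L8 u, l := L8 v))) = pval (z(k := u, l := v)) p"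
  unfolding pval_eval8 by (rule pval_local) (simp add: pval_var)

definition line :: "nat \<Rightarrow> (nat \<Rightarrow> complex) \<Rightarrow> P8 \<Rightarrow> complex poly" where
  "line K z p = subst8 (\<lambda>c. [:c:]) p (\<lambda>j. if j = K then [:0, 1:] else [:z j:])"

lemma line_mult: "line K z (p * q) = line K z p * line K z q"
  and line_1: "line K z 1 = 1"
  unfolding line_def
  by (simp_all only: ring_hom_mult[OF subst8_hom] ring_hom_one[OF subst8_hom] ring_hom_pCons_const)

lemma poly_line: "poly (line K z p) t = pval (z(K := t)) p"
proof -
  have "(\<lambda>j. poly (if j = K then [:0, 1:] else [:z j:]) t) = z(K := t)"
    by auto
  then show ?thesis
    using subst8_comp[OF ring_hom_poly[of t] ring_hom_pCons_const, of p]
    by (simp add: line_def pval_def)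
qed

section \<open>Dependence on variables\<close>

definition depends_on :: "P8 \<Rightarrow> nat \<Rightarrow> bool" where
  "depends_on p k \<longleftrightarrow> (\<exists>z. pval z p \<noteq> pval (z(k := 0)) p)"

lemma pval_upd_if_not_depends_on: "\<not> depends_on p k \<Longrightarrow> pval (z(k := t)) p = pval z p"
  unfolding depends_on_def by (metis fun_upd_upd)

lemma pval_eq_if_agree_on_dependencies:
  assumes agree: "\<forall>k<8. depends_on p k \<longrightarrow> z k = z' k"
  shows "pval z p = pval z' p"
proof -
  have "pval z p = pval (\<lambda>k. if k < n then z' k else z k) p" if "n \<le> 8" for n
    using that
  proof (induction n)
    case (Suc n)
    have "(\<lambda>k. if k < Suc n then z' k else z k) = (\<lambda>k. if k < n then z' k else z k)(n := z' n)"
      by auto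
    moreover have "pval ((\<lambda>k. if k < n then z' k else z k)(n := z' n)) p
        = pval (\<lambda>k. if k < n then z' k else z k) p"
      using agree Suc.prems
      by (cases "depends_on p n") (auto simp: pval_upd_if_not_depends_on fun_upd_idem)
    ultimately show ?case
      using Suc by simp
  qed simp
  from this[of 8] show ?thesis
    by (simp add: pval_local)
qed

lemma eq_L8_if_no_dependencies:
  assumes "\<forall>k<8. \<not> depends_on p k"
  shows "p = L8 (pval z p)"
proof (rule P8_eqI)
  fix z'
  show "pval z' p = pval z' (L8 (pval z p))"
    using pval_eq_if_agree_on_dependencies[of p z' z] assms by simp
qed

lemma is_unit_L8:
  assumes "c \<noteq> 0"
  shows "is_unit (L8 c)"
proof -
  have "L8 c * L8 (1 / c) = 1"
    using ring_hom_mult[OF ring_hom_L8, of c "1 / c"] ring_hom_one[OF ring_hom_L8] assms by simp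
  then show ?thesis
    by (metis dvd_triv_left)
qed

lemma unit_not_depends_on:
  assumes "is_unit u"
  shows "\<not> depends_on u k"
proof -
  have "pval z u = pval (z(k := 0)) u" for z
  proof -
    obtain v where "1 = u * v"
      using assms by (auto elim: dvdE)
    then have "is_unit (line k z u)"
      by (metis dvd_triv_left line_1 line_mult)
    then obtain c where c: "line k z u = [:c:]"
      using is_unit_poly_iff by blast
    have "pval z u = poly (line k z u) (z k)" "pval (z(k := 0)) u = poly (line k z u) 0"
      by (simp_all add: poly_line)
    then show ?thesis
      by (simp add: c)
  qed
  then show ?thesis
    unfolding depends_on_def by blast
qed

text \<open>On the line through a point parallel to the k-th axis, a product of two factors both
  depending on variable k has degree at least two, while f is affine there.\<close>

lemma not_both_depend_on_if_affine:
  assumes pq: "p * q = f"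
    and affine: "\<And>z t. pval (z(k := t)) f
                          = pval (z(k := 0)) f + t * (pval (z(k := 1)) f - pval (z(k := 0)) f)"
  shows "\<not> (depends_on p k \<and> depends_on q k)"
proof
  assume deps: "depends_on p k \<and> depends_on q k"
  define D where "D r = r - eval8 r (var(k := L8 0))" for r
  have pval_D: "pval z (D r) = pval z r - pval (z(k := 0)) r" for z r
    using pval_eval8_upd[of z r k 0 k 0] by (simp add: D_def)
  have "D p \<noteq> 0" "D q \<noteq> 0"
    using deps pval_D by (metis depends_on_def pval_0 right_minus_eq)+
  then obtain z where "pval z (D p * D q) \<noteq> 0"
    using P8_eqI[of "D p * D q" 0] by auto
  then have nonconst: "poly (line k z r) (z k) \<noteq> poly (line k z r) 0" if "r = p \<or> r = q" for r
    using that by (auto simp: poly_line pval_D)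
  have deg: "degree (line k z r) \<ge> 1" if "r = p \<or> r = q" for r
    using nonconst[OF that] degree_0_id[of "line k z r"] by (metis less_one not_le poly_const_conv)
  then have "line k z p \<noteq> 0" "line k z q \<noteq> 0"
    by fastforce+
  then have "degree (line k z f) \<ge> 2"
    using deg[of p] deg[of q] unfolding pq[symmetric] line_mult by (simp add: degree_mult_eq)
  moreover have
    "poly (line k z f) t = poly [:pval (z(k := 0)) f, pval (z(k := 1)) f - pval (z(k := 0)) f:] t" for t
    unfolding poly_line using affine[of z t] by (simp add: algebra_simps)
  then have "line k z f = [:pval (z(k := 0)) f, pval (z(k := 1)) f - pval (z(k := 0)) f:]"
    using poly_eq_poly_eq_iff by blast
  ultimately show False
    by (simp split: if_splits)
qed

lemma pval_mix_rank_one: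
  assumes pq: "p * q = f" and disjoint: "\<forall>k<8. \<not> (depends_on p k \<and> depends_on q k)"
  defines "mix \<equiv> \<lambda>z1 z2 k. if depends_on p k then z1 k else z2 k"
  shows "pval (mix z1 z2) f * pval (mix z1' z2') f = pval (mix z1 z2') f * pval (mix z1' z2) f"
proof -
  have p_eq: "pval (mix z1 z2) p = pval (mix z1 z2') p" for z1 z2 z2'
    by (rule pval_eq_if_agree_on_dependencies) (simp add: mix_def)
  have q_eq: "pval (mix z1 z2) q = pval (mix z1' z2) q" for z1 z1' z2
    by (rule pval_eq_if_agree_on_dependencies) (use disjoint in \<open>auto simp: mix_def\<close>)
  show ?thesis
    unfolding pq[symmetric] pval_mult
    using p_eq[of z1 z2 z2'] p_eq[of z1' z2' z2] q_eq[of z1 z2 z1'] q_eq[of z1' z2' z1]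
    by (simp add: mult_ac)
qed

lemma depends_on_some_variable:
  assumes "p * q = f" "f \<noteq> 0" "\<not> is_unit p"
  shows "\<exists>k<8. depends_on p k"
proof (rule ccontr)
  assume "\<not> ?thesis"
  then have p: "p = L8 (pval (\<lambda>_. 0) p)"
    using eq_L8_if_no_dependencies by blast
  show False
  proof (cases "pval (\<lambda>_. 0) p = 0")
    case True
    then show False
      using assms(1,2) p ring_hom_zero[OF ring_hom_L8] by auto
  next
    case False
    then show False
      using assms(3) p is_unit_L8 by metis
  qed
qed

section \<open>The multilinear form G\<close>

definition G_form :: "complex \<Rightarrow> complex \<Rightarrow> complex \<Rightarrow> complex \<Rightarrow> (nat \<Rightarrow> complex) \<Rightarrow> complex" where
  "G_form e1 e2 e3 e4 z =
       e1 * (z 0 * z 2 * z 4 * z 6 + z 1 * z 3 * z 5 * z 7)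
     + e2 * (z 0 * z 2 * z 5 * z 7 + z 1 * z 3 * z 4 * z 6)
     + e3 * (z 0 * z 3 * z 4 * z 7 + z 1 * z 2 * z 5 * z 6)
     + e4 * (z 0 * z 3 * z 5 * z 6 + z 1 * z 2 * z 4 * z 7)"

lemma pval_G:
  "pval z (G a b c d) = G_form ((a + d) / 2) ((a - d) / 2) ((b + c) / 2) ((b - c) / 2) z"
  unfolding G_def G_form_def by (simp add: mult_ac)

lemma less_8_cases: "(k::nat) < 8 \<Longrightarrow> k = 0 \<or> k = 1 \<or> k = 2 \<or> k = 3 \<or> k = 4 \<or> k = 5 \<or> k = 6 \<or> k = 7"
  by auto

lemma G_form_local:
  assumes "\<forall>k<8. z k = z' k"
  shows "G_form e1 e2 e3 e4 z = G_form e1 e2 e3 e4 z'"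
proof -
  have "z 0 = z' 0" "z 1 = z' 1" "z 2 = z' 2" "z 3 = z' 3"
    "z 4 = z' 4" "z 5 = z' 5" "z 6 = z' 6" "z 7 = z' 7"
    using assms by simp_all
  then show ?thesis
    unfolding G_form_def by (simp only:)
qed

lemma G_form_affine:
  "k < 8 \<Longrightarrow> G_form e1 e2 e3 e4 (z(k := t))
     = G_form e1 e2 e3 e4 (z(k := 0))
       + t * (G_form e1 e2 e3 e4 (z(k := 1)) - G_form e1 e2 e3 e4 (z(k := 0)))"
  by (drule less_8_cases) (elim disjE; simp add: G_form_def algebra_simps)

definition mate :: "nat \<Rightarrow> nat" where
  "mate k = (if even k then k + 1 else k - 1)"

lemma mate_mate [simp]: "mate (mate k) = k"
  and mate_neq [simp]: "mate k \<noteq> k"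
  and mate_div_2 [simp]: "mate k div 2 = k div 2"
  and odd_mate [simp]: "odd (mate k) \<longleftrightarrow> even k"
  and mate_less: "k < 8 \<Longrightarrow> mate k < 8"
  by (auto simp: mate_def elim: oddE)

lemma G_form_mate_zero: "k < 8 \<Longrightarrow> G_form e1 e2 e3 e4 (z(k := 0, mate k := 0)) = 0"
  by (drule less_8_cases) (elim disjE; simp add: G_form_def mate_def)

text \<open>The 0/1 point at which, for every factor i, exactly one of x_i, y_i equals 1, namely y_i iff
  i \<in> A.\<close>

definition pat :: "nat set \<Rightarrow> nat \<Rightarrow> complex" where
  "pat A k = (if (k div 2 \<in> A) = odd k then 1 else 0)"

lemma G_form_pat:
  "G_form e1 e2 e3 e4 (pat A) =
     (if (1 \<in> A \<longleftrightarrow> 0 \<in> A) \<and> (2 \<in> A \<longleftrightarrow> 0 \<in> A) \<and> (3 \<in> A \<longleftrightarrow> 0 \<in> A) then e1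
      else if (1 \<in> A \<longleftrightarrow> 0 \<in> A) \<and> (2 \<in> A \<longleftrightarrow> 0 \<notin> A) \<and> (3 \<in> A \<longleftrightarrow> 0 \<notin> A) then e2
      else if (1 \<in> A \<longleftrightarrow> 0 \<notin> A) \<and> (2 \<in> A \<longleftrightarrow> 0 \<in> A) \<and> (3 \<in> A \<longleftrightarrow> 0 \<notin> A) then e3
      else if (1 \<in> A \<longleftrightarrow> 0 \<notin> A) \<and> (2 \<in> A \<longleftrightarrow> 0 \<notin> A) \<and> (3 \<in> A \<longleftrightarrow> 0 \<in> A) then e4
      else 0)"
  by (cases "0 \<in> A"; cases "1 \<in> A"; cases "2 \<in> A"; cases "3 \<in> A") (simp_all add: G_form_def pat_def)

lemma G_form_nonvanishing:
  assumes "\<not> (e1 = 0 \<and> e2 = 0 \<and> e3 = 0 \<and> e4 = 0)" "k < 8"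
  obtains z where "z k = 1" "z (mate k) = 0" "G_form e1 e2 e3 e4 z \<noteq> 0"
proof -
  obtain A where A: "G_form e1 e2 e3 e4 (pat A) \<noteq> 0" "G_form e1 e2 e3 e4 (pat (- A)) \<noteq> 0"
  proof -
    have "G_form e1 e2 e3 e4 (pat {}) = e1" "G_form e1 e2 e3 e4 (pat (- {})) = e1"
      "G_form e1 e2 e3 e4 (pat {2, 3}) = e2" "G_form e1 e2 e3 e4 (pat (- {2, 3})) = e2"
      "G_form e1 e2 e3 e4 (pat {1, 3}) = e3" "G_form e1 e2 e3 e4 (pat (- {1, 3})) = e3"
      "G_form e1 e2 e3 e4 (pat {1, 2}) = e4" "G_form e1 e2 e3 e4 (pat (- {1, 2})) = e4"
      by (simp_all add: G_form_pat)
    then show ?thesis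
      using assms(1) that by metis
  qed
  show ?thesis
  proof (cases "(k div 2 \<in> A) = odd k")
    case True
    then show ?thesis
      using that[of "pat A"] A by (simp add: pat_def)
  next
    case False
    then show ?thesis
      using that[of "pat (- A)"] A by (simp add: pat_def)
  qed
qed

lemma factors_of_G_form_disjoint:
  assumes f: "\<And>z. pval z f = G_form e1 e2 e3 e4 z" and pq: "p * q = f"
  shows "\<forall>k<8. \<not> (depends_on p k \<and> depends_on q k)"
proof (intro allI impI)
  fix k :: nat
  assume "k < 8"
  then show "\<not> (depends_on p k \<and> depends_on q k)"
    by (intro not_both_depend_on_if_affine[OF pq]) (simp only: f, rule G_form_affine)
qed

lemma G_form_mate_products_nonzero:
  assumes f: "\<And>z. pval z f = G_form e1 e2 e3 e4 z"
    and e: "\<not> (e1 = 0 \<and> e2 = 0 \<and> e3 = 0 \<and> e4 = 0)" and k: "k < 8"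
  shows "\<exists>r. G_form e1 e2 e3 e4 (r(k := 1, mate k := 0)) * G_form e1 e2 e3 e4 (r(k := 0, mate k := 1))
               \<noteq> 0"
proof -
  define g where "g u v = eval8 f (var(k := L8 u, mate k := L8 v))" for u v
  have pval_g: "pval r (g u v) = G_form e1 e2 e3 e4 (r(k := u, mate k := v))" for r u v
    by (simp add: g_def pval_eval8_upd f)
  obtain z1 where "z1 k = 1" "z1 (mate k) = 0" "G_form e1 e2 e3 e4 z1 \<noteq> 0"
    using G_form_nonvanishing[OF e k] .
  then have "pval z1 (g 1 0) \<noteq> 0"
    by (simp add: pval_g fun_upd_idem)
  moreover obtain z2 where "z2 (mate k) = 1" "z2 k = 0" "G_form e1 e2 e3 e4 z2 \<noteq> 0"
    using G_form_nonvanishing[OF e mate_less[OF k]] by auto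
  then have "pval z2 (g 0 1) \<noteq> 0"
    by (simp add: pval_g fun_upd_idem)
  ultimately have "g 1 0 * g 0 1 \<noteq> 0"
    by fastforce
  then obtain r where "pval r (g 1 0 * g 0 1) \<noteq> 0"
    using P8_eqI[of "g 1 0 * g 0 1" 0] by auto
  then show ?thesis
    by (auto simp: pval_g)
qed

text \<open>The variables of a factor of G come in pairs x_i, y_i: otherwise the rank-one relation
  between the factors, applied to the four ways of setting this pair to 0 or 1, makes the product
  above vanish identically.\<close>

lemma factor_depends_on_mate:
  assumes f: "\<And>z. pval z f = G_form e1 e2 e3 e4 z"
    and e: "\<not> (e1 = 0 \<and> e2 = 0 \<and> e3 = 0 \<and> e4 = 0)"
    and pq: "p * q = f" and k: "k < 8" and dep: "depends_on p k"
  shows "depends_on p (mate k)"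
proof (rule ccontr)
  assume indep: "\<not> depends_on p (mate k)"
  let ?F = "G_form e1 e2 e3 e4"
  let ?mix = "\<lambda>z1 z2 j. if depends_on p j then z1 j else z2 j"
  have mix: "?mix (r(k := u)) (r(mate k := v)) = r(k := u, mate k := v)" for r u v
    using dep indep by (auto simp: fun_eq_iff)
  have "?F (r(k := 1, mate k := 0)) * ?F (r(k := 0, mate k := 1))
      = ?F (r(k := 1, mate k := 1)) * ?F (r(k := 0, mate k := 0))" for r
    using pval_mix_rank_one[OF pq factors_of_G_form_disjoint[OF f pq],
        of "r(k := 1)" "r(mate k := 0)" "r(k := 0)" "r(mate k := 1)"]
    by (simp only: mix f)
  then have "?F (r(k := 1, mate k := 0)) * ?F (r(k := 0, mate k := 1)) = 0" for r
    by (simp add: G_form_mate_zero[OF k])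
  then show False
    using G_form_mate_products_nonzero[OF f e k] by blast
qed

definition mix_factors :: "(nat \<Rightarrow> bool) \<Rightarrow> (nat \<Rightarrow> complex) \<Rightarrow> (nat \<Rightarrow> complex) \<Rightarrow> nat \<Rightarrow> complex" where
  "mix_factors s z1 z2 = (\<lambda>k. if s (k div 2) then z1 k else z2 k)"

definition coeff_pairing :: "complex \<Rightarrow> complex \<Rightarrow> complex \<Rightarrow> complex \<Rightarrow> bool" where
  "coeff_pairing e1 e2 e3 e4 \<longleftrightarrow>
     (e1 = 0 \<and> e2 = 0 \<and> e3\<^sup>2 = e4\<^sup>2) \<or> (e3 = 0 \<and> e4 = 0 \<and> e1\<^sup>2 = e2\<^sup>2) \<or>
     (e1 = 0 \<and> e3 = 0 \<and> e2\<^sup>2 = e4\<^sup>2) \<or> (e2 = 0 \<and> e4 = 0 \<and> e1\<^sup>2 = e3\<^sup>2) \<or>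
     (e1 = 0 \<and> e4 = 0 \<and> e2\<^sup>2 = e3\<^sup>2) \<or> (e2 = 0 \<and> e3 = 0 \<and> e1\<^sup>2 = e4\<^sup>2)"

lemma mix_factors_pat: "mix_factors s (pat A) (pat B) = pat {i. if s i then i \<in> A else i \<in> B}"
  by (simp add: mix_factors_def pat_def fun_eq_iff)

lemma less_4_cases: "(i::nat) < 4 \<Longrightarrow> i = 0 \<or> i = 1 \<or> i = 2 \<or> i = 3"
  by auto

text \<open>Each minor used exchanges the restrictions of two monomials A, B of G to the two groups of
  factors. Depending on the parities of A and B on the groups the exchanged points are again
  monomials of G or not, giving equations e_A^2 = e_B^2 or e_A e_B = 0.\<close>

lemma coeff_pairing_if_rank_one:
  assumes R: "\<And>z1 z2 z1' z2'.
      G_form e1 e2 e3 e4 (mix_factors s z1 z2) * G_form e1 e2 e3 e4 (mix_factors s z1' z2')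
    = G_form e1 e2 e3 e4 (mix_factors s z1 z2') * G_form e1 e2 e3 e4 (mix_factors s z1' z2)"
    and "i < 4" "s i" "j < 4" "\<not> s j"
  shows "coeff_pairing e1 e2 e3 e4"
proof -
  let ?F = "G_form e1 e2 e3 e4"
  have minor:
    "?F (pat A) * ?F (pat B) = ?F (mix_factors s (pat A) (pat B)) * ?F (mix_factors s (pat B) (pat A))"
    for A B
    using R[of "pat A" "pat A" "pat B" "pat B"] by (simp add: mix_factors_def)
  note minors = minor[of "{}" "{2, 3}"] minor[of "{}" "{1, 3}"] minor[of "{}" "{1, 2}"]
    minor[of "{2, 3}" "{1, 3}"] minor[of "{2, 3}" "{1, 2}"] minor[of "{1, 3}" "{1, 2}"]
    minor[of "{}" "{0, 1, 2, 3}"] minor[of "{2, 3}" "{0, 1}"] minor[of "{1, 3}" "{0, 2}"]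
    minor[of "{1, 2}" "{0, 3}"]
  have "\<not> (s 0 \<and> s 1 \<and> s 2 \<and> s 3)" "s 0 \<or> s 1 \<or> s 2 \<or> s 3"
    using assms(2-5) by (metis less_4_cases)+
  then show ?thesis
    by (cases "s 0"; cases "s 1"; cases "s 2"; cases "s 3"; insert minors;
        simp add: G_form_pat mix_factors_pat; auto simp: coeff_pairing_def power2_eq_square)
qed

definition special_params :: "complex \<Rightarrow> complex \<Rightarrow> complex \<Rightarrow> complex \<Rightarrow> bool" where
  "special_params a b c d \<longleftrightarrow>
     (a\<^sup>2 = b\<^sup>2 \<and> b\<^sup>2 = c\<^sup>2 \<and> c\<^sup>2 = d\<^sup>2) \<or>
     (a = 0 \<and> b = 0 \<and> c = 0) \<or> (a = 0 \<and> b = 0 \<and> d = 0) \<or>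
     (a = 0 \<and> c = 0 \<and> d = 0) \<or> (b = 0 \<and> c = 0 \<and> d = 0)"

lemma special_params_if_coeff_pairing:
  assumes "coeff_pairing e1 e2 e3 e4"
  shows "special_params (e1 + e2) (e3 + e4) (e3 - e4) (e1 - e2)"
  using assms unfolding coeff_pairing_def special_params_def
  by (elim disjE conjE) (auto simp: power2_eq_iff)

lemma G_params_nonzero:
  fixes a b c d :: complex
  assumes "\<not> (a = 0 \<and> b = 0 \<and> c = 0 \<and> d = 0)"
  shows "\<not> ((a + d) / 2 = 0 \<and> (a - d) / 2 = 0 \<and> (b + c) / 2 = 0 \<and> (b - c) / 2 = 0)"
proof -
  have "a = (a + d) / 2 + (a - d) / 2" "d = (a + d) / 2 - (a - d) / 2"
    "b = (b + c) / 2 + (b - c) / 2" "c = (b + c) / 2 - (b - c) / 2"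
    by (simp_all add: field_simps)
  then show ?thesis
    using assms by auto
qed

lemma coeff_pairing_if_factorisation:
  assumes f: "\<And>z. pval z f = G_form e1 e2 e3 e4 z"
    and e: "\<not> (e1 = 0 \<and> e2 = 0 \<and> e3 = 0 \<and> e4 = 0)"
    and pq: "p * q = f" and units: "\<not> is_unit p" "\<not> is_unit q"
  shows "coeff_pairing e1 e2 e3 e4"
proof -
  have "f \<noteq> 0"
    using G_form_nonvanishing[OF e, of 0] f by (metis pval_0 zero_less_numeral)
  have disjoint: "\<forall>k<8. \<not> (depends_on p k \<and> depends_on q k)"
    using factors_of_G_form_disjoint[OF f pq] .
  define s where "s i \<longleftrightarrow> depends_on p (2 * i)" for i
  have depends_p: "depends_on p k \<longleftrightarrow> s (k div 2)" if "k < 8" for k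
  proof -
    have "2 * (k div 2) = k \<or> 2 * (k div 2) = mate k"
      by (auto simp: mate_def)
    then show ?thesis
      using factor_depends_on_mate[OF f e pq] mate_less that by (metis s_def mate_mate)
  qed
  have "G_form e1 e2 e3 e4 (mix_factors s z1 z2) * G_form e1 e2 e3 e4 (mix_factors s z1' z2')
      = G_form e1 e2 e3 e4 (mix_factors s z1 z2') * G_form e1 e2 e3 e4 (mix_factors s z1' z2)"
    for z1 z2 z1' z2'
  proof -
    have "G_form e1 e2 e3 e4 (\<lambda>k. if depends_on p k then w1 k else w2 k)
        = G_form e1 e2 e3 e4 (mix_factors s w1 w2)" for w1 w2
      by (rule G_form_local) (simp add: mix_factors_def depends_p)
    then show ?thesis
      using pval_mix_rank_one[OF pq disjoint, of z1 z2 z1' z2'] by (simp only: f)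
  qed
  moreover obtain k where "k < 8" "depends_on p k"
    using depends_on_some_variable[OF pq \<open>f \<noteq> 0\<close> units(1)] by blast
  moreover obtain k' where "k' < 8" "depends_on q k'"
    using depends_on_some_variable[of q p] pq \<open>f \<noteq> 0\<close> units(2) by (auto simp: mult.commute)
  ultimately show ?thesis
    using coeff_pairing_if_rank_one[of e1 e2 e3 e4 s "k div 2" "k' div 2"] depends_p disjoint by auto
qed

lemma special_params_if_reducible:
  fixes a b c d :: complex
  assumes nz: "\<not> (a = 0 \<and> b = 0 \<and> c = 0 \<and> d = 0)" and red: "reducible (G a b c d)"
  shows "special_params a b c d"
proof -
  obtain p q where "p * q = G a b c d" "\<not> is_unit p" "\<not> is_unit q"
    using red unfolding reducible_def irreducible_def by auto
  then have "coeff_pairing ((a + d) / 2) ((a - d) / 2) ((b + c) / 2) ((b - c) / 2)"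
    using coeff_pairing_if_factorisation[OF pval_G G_params_nonzero[OF nz]] by blast
  then have "special_params ((a + d) / 2 + (a - d) / 2) ((b + c) / 2 + (b - c) / 2)
      ((b + c) / 2 - (b - c) / 2) ((a + d) / 2 - (a - d) / 2)"
    by (rule special_params_if_coeff_pairing)
  then show ?thesis
    by (simp add: field_simps)
qed

section \<open>The orbit of a product of two binary forms\<close>

definition gamma_point ::
  "(nat \<Rightarrow> complex) \<Rightarrow> (nat \<Rightarrow> complex) \<Rightarrow> (nat \<Rightarrow> complex) \<Rightarrow> (nat \<Rightarrow> complex)
   \<Rightarrow> (nat \<Rightarrow> nat) \<Rightarrow> (nat \<Rightarrow> complex) \<Rightarrow> nat \<Rightarrow> complex" where
  "gamma_point al be ga de sg z k =
     (let i = k div 2 in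
      if even k then al i * z (2 * sg i) + be i * z (2 * sg i + 1)
      else ga i * z (2 * sg i) + de i * z (2 * sg i + 1))"

lemma pval_eval8_Gamma_subst:
  assumes "sg permutes {0..<4}"
  shows "pval z (eval8 p (Gamma_subst al be ga de sg)) = pval (gamma_point al be ga de sg z) p"
proof -
  have "sg (k div 2) < 4" if "k < 8" for k :: nat
    using permutes_in_image[OF assms, of "k div 2"] that by simp
  then show ?thesis
    unfolding pval_eval8
    by (intro pval_local) (simp add: Gamma_subst_def gamma_point_def Let_def)
qed

lemma in_Gamma_orbit_projI:
  assumes "in_Gamma al be ga de sg" "lam \<noteq> 0"
    and "\<And>z. pval z f = lam * pval (gamma_point al be ga de sg z) h"
  shows "in_Gamma_orbit_proj f h"
proof -
  have "f = L8 lam * eval8 h (Gamma_subst al be ga de sg)"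
    using assms(1,3) by (intro P8_eqI) (simp add: in_Gamma_def pval_eval8_Gamma_subst)
  then show ?thesis
    unfolding in_Gamma_orbit_proj_def using assms(1,2) by blast
qed

abbreviation factored_form :: P8 where
  "factored_form \<equiv> (X 0 * X 1 - Y 0 * Y 1) * (X 2 * X 3 - Y 2 * Y 3)"

text \<open>All witnesses needed act by one matrix on the second and fourth factor and by the identity
  on the other two.\<close>

lemma G_in_orbit_by_witness:
  assumes "\<alpha> * \<delta> - \<beta> * \<gamma> = 1" "sg permutes {0..<4}" "lam \<noteq> 0"
    and "\<And>z. G_form ((a + d) / 2) ((a - d) / 2) ((b + c) / 2) ((b - c) / 2) z
       = lam * pval (gamma_point (\<lambda>i. if odd i then \<alpha> else 1) (\<lambda>i. if odd i then \<beta> else 0)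
                       (\<lambda>i. if odd i then \<gamma> else 0) (\<lambda>i. if odd i then \<delta> else 1) sg z) factored_form"
  shows "in_Gamma_orbit_proj (G a b c d) factored_form"
  using assms by (intro in_Gamma_orbit_projI) (auto simp: in_Gamma_def pval_G)

lemma G_in_orbit_three_zeros:
  fixes a b c d :: complex
  shows "d \<noteq> 0 \<Longrightarrow> in_Gamma_orbit_proj (G 0 0 0 d) factored_form"
    and "c \<noteq> 0 \<Longrightarrow> in_Gamma_orbit_proj (G 0 0 c 0) factored_form"
    and "b \<noteq> 0 \<Longrightarrow> in_Gamma_orbit_proj (G 0 b 0 0) factored_form"
    and "a \<noteq> 0 \<Longrightarrow> in_Gamma_orbit_proj (G a 0 0 0) factored_form"
proof -
  show "d \<noteq> 0 \<Longrightarrow> in_Gamma_orbit_proj (G 0 0 0 d) factored_form"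
    by (rule G_in_orbit_by_witness[where \<alpha>="1" and \<beta>="0" and \<gamma>="0" and \<delta>="1"
        and sg="id" and lam="d / 2"];
      simp add: G_form_def gamma_point_def permutes_swap_id; (algebra | (insert i_squared, algebra)))
  show "c \<noteq> 0 \<Longrightarrow> in_Gamma_orbit_proj (G 0 0 c 0) factored_form"
    by (rule G_in_orbit_by_witness[where \<alpha>="0" and \<beta>="\<i>" and \<gamma>="\<i>" and \<delta>="0"
        and sg="id" and lam="- c / 2"];
      simp add: G_form_def gamma_point_def permutes_swap_id; (algebra | (insert i_squared, algebra)))
  show "b \<noteq> 0 \<Longrightarrow> in_Gamma_orbit_proj (G 0 b 0 0) factored_form"
    by (rule G_in_orbit_by_witness[where \<alpha>="0" and \<beta>="1" and \<gamma>="-1" and \<delta>="0"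
        and sg="id" and lam="b / 2"];
      simp add: G_form_def gamma_point_def permutes_swap_id; (algebra | (insert i_squared, algebra)))
  show "a \<noteq> 0 \<Longrightarrow> in_Gamma_orbit_proj (G a 0 0 0) factored_form"
    by (rule G_in_orbit_by_witness[where \<alpha>="\<i>" and \<beta>="0" and \<gamma>="0" and \<delta>="- \<i>"
        and sg="id" and lam="- a / 2"];
      simp add: G_form_def gamma_point_def permutes_swap_id; (algebra | (insert i_squared, algebra)))
qed

lemma G_in_orbit_equal_squares:
  fixes a b c d :: complex
  shows "a \<noteq> 0 \<Longrightarrow> in_Gamma_orbit_proj (G a a a a) factored_form"
    and "a \<noteq> 0 \<Longrightarrow> in_Gamma_orbit_proj (G a a a (- a)) factored_form"
    and "a \<noteq> 0 \<Longrightarrow> in_Gamma_orbit_proj (G a a (- a) a) factored_form"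
    and "a \<noteq> 0 \<Longrightarrow> in_Gamma_orbit_proj (G a a (- a) (- a)) factored_form"
    and "a \<noteq> 0 \<Longrightarrow> in_Gamma_orbit_proj (G a (- a) a a) factored_form"
    and "a \<noteq> 0 \<Longrightarrow> in_Gamma_orbit_proj (G a (- a) a (- a)) factored_form"
    and "a \<noteq> 0 \<Longrightarrow> in_Gamma_orbit_proj (G a (- a) (- a) a) factored_form"
    and "a \<noteq> 0 \<Longrightarrow> in_Gamma_orbit_proj (G a (- a) (- a) (- a)) factored_form"
proof -
  show "a \<noteq> 0 \<Longrightarrow> in_Gamma_orbit_proj (G a a a a) factored_form"
    by (rule G_in_orbit_by_witness[where \<alpha>="\<i>" and \<beta>="0" and \<gamma>="0" and \<delta>="- \<i>"
        and sg="transpose 1 2" and lam="- a"];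
      simp add: G_form_def gamma_point_def permutes_swap_id; (algebra | (insert i_squared, algebra)))
  show "a \<noteq> 0 \<Longrightarrow> in_Gamma_orbit_proj (G a a a (- a)) factored_form"
    by (rule G_in_orbit_by_witness[where \<alpha>="0" and \<beta>="1" and \<gamma>="-1" and \<delta>="0"
        and sg="transpose 1 3" and lam="a"];
      simp add: G_form_def gamma_point_def permutes_swap_id; (algebra | (insert i_squared, algebra)))
  show "a \<noteq> 0 \<Longrightarrow> in_Gamma_orbit_proj (G a a (- a) a) factored_form"
    by (rule G_in_orbit_by_witness[where \<alpha>="\<i>" and \<beta>="0" and \<gamma>="0" and \<delta>="- \<i>"
        and sg="transpose 1 3" and lam="- a"];
      simp add: G_form_def gamma_point_def permutes_swap_id; (algebra | (insert i_squared, algebra)))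
  show "a \<noteq> 0 \<Longrightarrow> in_Gamma_orbit_proj (G a a (- a) (- a)) factored_form"
    by (rule G_in_orbit_by_witness[where \<alpha>="0" and \<beta>="1" and \<gamma>="-1" and \<delta>="0"
        and sg="transpose 1 2" and lam="a"];
      simp add: G_form_def gamma_point_def permutes_swap_id; (algebra | (insert i_squared, algebra)))
  show "a \<noteq> 0 \<Longrightarrow> in_Gamma_orbit_proj (G a (- a) a a) factored_form"
    by (rule G_in_orbit_by_witness[where \<alpha>="1" and \<beta>="0" and \<gamma>="0" and \<delta>="1"
        and sg="transpose 1 3" and lam="a"];
      simp add: G_form_def gamma_point_def permutes_swap_id; (algebra | (insert i_squared, algebra)))
  show "a \<noteq> 0 \<Longrightarrow> in_Gamma_orbit_proj (G a (- a) a (- a)) factored_form"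
    by (rule G_in_orbit_by_witness[where \<alpha>="0" and \<beta>="\<i>" and \<gamma>="\<i>" and \<delta>="0"
        and sg="transpose 1 2" and lam="- a"];
      simp add: G_form_def gamma_point_def permutes_swap_id; (algebra | (insert i_squared, algebra)))
  show "a \<noteq> 0 \<Longrightarrow> in_Gamma_orbit_proj (G a (- a) (- a) a) factored_form"
    by (rule G_in_orbit_by_witness[where \<alpha>="1" and \<beta>="0" and \<gamma>="0" and \<delta>="1"
        and sg="transpose 1 2" and lam="a"];
      simp add: G_form_def gamma_point_def permutes_swap_id; (algebra | (insert i_squared, algebra)))
  show "a \<noteq> 0 \<Longrightarrow> in_Gamma_orbit_proj (G a (- a) (- a) (- a)) factored_form"
    by (rule G_in_orbit_by_witness[where \<alpha>="0" and \<beta>="\<i>" and \<gamma>="\<i>" and \<delta>="0"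
        and sg="transpose 1 3" and lam="a"];
      simp add: G_form_def gamma_point_def permutes_swap_id; (algebra | (insert i_squared, algebra)))
qed

lemma G_in_orbit_if_special_params:
  fixes a b c d :: complex
  assumes nz: "\<not> (a = 0 \<and> b = 0 \<and> c = 0 \<and> d = 0)" and special: "special_params a b c d"
  shows "in_Gamma_orbit_proj (G a b c d) factored_form"
proof -
  have "in_Gamma_orbit_proj (G a b c d) factored_form" if "a\<^sup>2 = b\<^sup>2" "b\<^sup>2 = c\<^sup>2" "c\<^sup>2 = d\<^sup>2"
  proof -
    have "a \<noteq> 0"
      using nz that by auto
    moreover have "b = a \<or> b = - a" "c = a \<or> c = - a" "d = a \<or> d = - a"
      using that by (auto simp: power2_eq_iff)
    ultimately show ?thesis
      using G_in_orbit_equal_squares by blast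
  qed
  then show ?thesis
    using special nz G_in_orbit_three_zeros unfolding special_params_def by blast
qed

lemma eval8_binary_form_not_unit:
  assumes \<gamma>: "in_Gamma al be ga de sg" and ij: "i < 4" "j < 4" "i \<noteq> j"
  shows "\<not> is_unit (eval8 (X i * X j - Y i * Y j) (Gamma_subst al be ga de sg))"
proof
  let ?u = "eval8 (X i * X j - Y i * Y j) (Gamma_subst al be ga de sg)"
  let ?w = "gamma_point al be ga de sg"
  assume "is_unit ?u"
  then have const: "pval z ?u = pval z' ?u" for z z'
    using unit_not_depends_on pval_eq_if_agree_on_dependencies by blast
  have sg: "sg permutes {0..<4}"
    and det: "al i * de i - be i * ga i = 1" "al j * de j - be j * ga j = 1"
    using \<gamma> ij by (auto simp: in_Gamma_def)
  have "sg i \<noteq> sg j"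
    using permutes_inj[OF sg] ij by (auto dest: injD)
  have pval_u: "pval z ?u = ?w z (2 * i) * ?w z (2 * j) - ?w z (2 * i + 1) * ?w z (2 * j + 1)" for z
    using ij by (simp add: pval_eval8_Gamma_subst[OF sg])
  define z where "z k = (if k div 2 = sg i then (if even k then de i else - ga i)
      else if k div 2 = sg j then (if even k then de j else - ga j) else 0)" for k
  have "pval z ?u = 1"
    unfolding pval_u using \<open>sg i \<noteq> sg j\<close> det by (simp add: gamma_point_def z_def algebra_simps)
  moreover have "pval (\<lambda>_. 0) ?u = 0"
    unfolding pval_u by (simp add: gamma_point_def)
  ultimately show False
    using const[of z "\<lambda>_. 0"] by simp
qed

lemma reducible_if_in_orbit:
  fixes a b c d :: complex
  assumes nz: "\<not> (a = 0 \<and> b = 0 \<and> c = 0 \<and> d = 0)"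
    and orbit: "in_Gamma_orbit_proj (G a b c d) factored_form"
  shows "reducible (G a b c d)"
proof -
  obtain al be ga de sg lam where \<gamma>: "in_Gamma al be ga de sg" and "lam \<noteq> 0"
    and G_eq: "G a b c d = L8 lam * eval8 factored_form (Gamma_subst al be ga de sg)"
    using orbit unfolding in_Gamma_orbit_proj_def by blast
  let ?s = "Gamma_subst al be ga de sg"
  have "G a b c d = (L8 lam * eval8 (X 0 * X 1 - Y 0 * Y 1) ?s) * eval8 (X 2 * X 3 - Y 2 * Y 3) ?s"
    unfolding G_eq eval8_mult by (simp add: mult.assoc)
  moreover have "\<not> is_unit (L8 lam * eval8 (X 0 * X 1 - Y 0 * Y 1) ?s)"
    using eval8_binary_form_not_unit[OF \<gamma>, of 0 1] by (simp add: is_unit_mult_iff)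
  moreover have "\<not> is_unit (eval8 (X 2 * X 3 - Y 2 * Y 3) ?s)"
    using eval8_binary_form_not_unit[OF \<gamma>, of 2 3] by simp
  moreover obtain z where "G_form ((a + d) / 2) ((a - d) / 2) ((b + c) / 2) ((b - c) / 2) z \<noteq> 0"
    using G_form_nonvanishing[OF G_params_nonzero[OF nz], of 0] by auto
  then have "pval z (G a b c d) \<noteq> pval (\<lambda>_. 0) (G a b c d)"
    by (simp add: pval_G G_form_def)
  then have "G a b c d \<noteq> 0" "\<not> is_unit (G a b c d)"
    using unit_not_depends_on pval_eq_if_agree_on_dependencies by (metis pval_0, blast)
  ultimately show ?thesis
    unfolding reducible_def irreducible_def by blast
qed

theorem mainTheorem8:
  fixes a b c d :: complex
  assumes "\<not> (a = 0 \<and> b = 0 \<and> c = 0 \<and> d = 0)"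
  shows "(reducible (G a b c d) \<longleftrightarrow>
           ((a^2 = b^2 \<and> b^2 = c^2 \<and> c^2 = d^2) \<or>
            (a = 0 \<and> b = 0 \<and> c = 0) \<or> (a = 0 \<and> b = 0 \<and> d = 0) \<or>
            (a = 0 \<and> c = 0 \<and> d = 0) \<or> (b = 0 \<and> c = 0 \<and> d = 0)))
       \<and> (((a^2 = b^2 \<and> b^2 = c^2 \<and> c^2 = d^2) \<or>
            (a = 0 \<and> b = 0 \<and> c = 0) \<or> (a = 0 \<and> b = 0 \<and> d = 0) \<or>
            (a = 0 \<and> c = 0 \<and> d = 0) \<or> (b = 0 \<and> c = 0 \<and> d = 0))
          \<longleftrightarrow> in_Gamma_orbit_proj (G a b c d)
                 ((X 0 * X 1 - Y 0 * Y 1) * (X 2 * X 3 - Y 2 * Y 3)))"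
proof -
  have "reducible (G a b c d) \<longleftrightarrow> special_params a b c d"
    and "special_params a b c d \<longleftrightarrow> in_Gamma_orbit_proj (G a b c d) factored_form"
    using special_params_if_reducible[OF assms] G_in_orbit_if_special_params[OF assms]
      reducible_if_in_orbit[OF assms] by blast+
  then show ?thesis
    unfolding special_params_def by (rule conjI)
qed

end
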